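(* Let $L, C_H, C_L, R_D, R_H, R_L, E_H, E_L$ be positive constants and set $$\alpha=\frac{1}{R_{DH}C_H},\qquad R_{DH}=\frac{R_DR_H}{R_D+R_H},\qquad \beta_H=\frac{E_H}{R_HC_H},\qquad \beta_L=\frac{E_L}{R_LC_L}.$$ Consider the system $$\dot x_1=-\frac{1}{L}x_3+\frac{1}{L}x_2u,\qquad \dot x_2=-\alpha x_2-\frac{1}{C_H}x_1u+\beta_H,\qquad \dot x_3=\frac{1}{C_L}x_1-\frac{1}{R_LC_L}x_3+\beta_L,$$ where $u=u(t)$ is any control with $u\in\mathcal L_\infty$ (an essentially bounded function of time). Then the system is uniformly stable, i.e. every solution $\xi(t)$ of the system (for this $u$) is uniformly stable: for every $\varepsilon>0$ there is $\delta>0$, independent of the initial time $t_0$, such that any solution $x(t)$ with $\|x(t_0)-\xi(t_0)\|<\delta$ satisfies $\|x(t)-\xi(t)\|<\varepsilon$ for all $t\ge t_0$.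
   Context: The system models a bidirectional buck-boost DC-DC converter: $x_1$ is the inductor current, $x_2$ the high-voltage-side capacitor voltage, $x_3$ the low-voltage-side capacitor voltage; $E_H,R_H$ are the high-voltage source and its internal resistance, $E_L,R_L$ the battery voltage and internal resistance, $R_D$ the load resistance. *)

theory Defs
  imports "HOL-Analysis.Analysis"
begin

definition bbc_field ::
  "real \<Rightarrow> real \<Rightarrow> real \<Rightarrow> real \<Rightarrow> real \<Rightarrow> real \<Rightarrow> real \<Rightarrow> real \<Rightarrow> real \<Rightarrow> real^3 \<Rightarrow> real^3" where
  "bbc_field L C_H C_L R_D R_H R_L E_H E_L v x =
     (let R_DH = R_D * R_H / (R_D + R_H);
          \<alpha> = 1 / (R_DH * C_H);
          \<beta>_H = E_H / (R_H * C_H);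
          \<beta>_L = E_L / (R_L * C_L)
      in vector [ - (1 / L) * x$3 + (1 / L) * x$2 * v,
                  - \<alpha> * x$2 - (1 / C_H) * x$1 * v + \<beta>_H,
                  (1 / C_L) * x$1 - (1 / (R_L * C_L)) * x$3 + \<beta>_L ])"

definition ess_bounded :: "(real \<Rightarrow> real) \<Rightarrow> bool" where
  "ess_bounded u \<longleftrightarrow> u \<in> borel_measurable lborel \<and> (\<exists>B. AE t in lborel. \<bar>u t\<bar> \<le> B)"

text \<open>Solution (in the Caratheodory / integral sense) of x' = f (u t) x on [T, infinity).\<close>
definition is_solution_from ::
  "(real \<Rightarrow> real^3 \<Rightarrow> real^3) \<Rightarrow> (real \<Rightarrow> real) \<Rightarrow> (real \<Rightarrow> real^3) \<Rightarrow> real \<Rightarrow> bool" where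
  "is_solution_from f u x T \<longleftrightarrow>
     (\<forall>s t. T \<le> s \<longrightarrow> s \<le> t \<longrightarrow> ((\<lambda>r. f (u r) (x r)) has_integral (x t - x s)) {s..t})"

definition uniformly_stable_solution ::
  "(real \<Rightarrow> real^3 \<Rightarrow> real^3) \<Rightarrow> (real \<Rightarrow> real) \<Rightarrow> (real \<Rightarrow> real^3) \<Rightarrow> real \<Rightarrow> bool" where
  "uniformly_stable_solution f u \<xi> T \<longleftrightarrow>
     (\<forall>\<epsilon>>0. \<exists>\<delta>>0. \<forall>t0 x. T \<le> t0 \<longrightarrow> is_solution_from f u x t0 \<longrightarrow>
        norm (x t0 - \<xi> t0) < \<delta> \<longrightarrow> (\<forall>t\<ge>t0. norm (x t - \<xi> t) < \<epsilon>))"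

end

theory Submission
  imports Defs
begin

text \<open>The stored energy \<open>V x = L x\<^sub>1\<^sup>2 + C\<^sub>H x\<^sub>2\<^sup>2 + C\<^sub>L x\<^sub>3\<^sup>2\<close>
  (\<open>= x \<bullet> bbc_energy_weight x\<close>) of the inductor and the two capacitors is a Lyapunov function
  common to all control values. The difference \<open>e = x - \<xi>\<close> of two solutions solves the linear
  system \<open>e' = A\<^sub>0 e + u A\<^sub>1 e\<close> (the constant sources cancel): the switching part \<open>A\<^sub>1\<close> is
  skew with respect to \<open>V\<close>, as it only exchanges energy between the inductor and the high-voltage
  capacitor, and \<open>A\<^sub>0\<close> dissipates energy through \<open>R\<^sub>D\<^sub>H\<close> and \<open>R\<^sub>L\<close>. Hence \<open>V (e t)\<close>
  does not increase, and since \<open>V\<close> is equivalent to the squared norm,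
  \<open>\<parallel>e t\<parallel> \<le> \<kappa> \<parallel>e t\<^sub>0\<parallel>\<close> with \<open>\<kappa>\<close> independent of \<open>t\<^sub>0\<close> and of \<open>u\<close>.

  Solutions are only defined in the integral sense, so monotonicity of \<open>V \<circ> e\<close> is obtained
  without derivatives: \<open>e\<close> is Lipschitz on compact intervals, which gives
  \<open>V (e t) - V (e s) \<le> C (t - s)\<^sup>2\<close>, and increments of that size force monotonicity.\<close>

lemma le_if_increments_le_square:
  fixes \<phi> :: "real \<Rightarrow> real"
  assumes increment: "\<And>s t. a \<le> s \<Longrightarrow> s \<le> t \<Longrightarrow> t \<le> b \<Longrightarrow> \<phi> t - \<phi> s \<le> K * (t - s)\<^sup>2"
    and "a \<le> b"
  shows "\<phi> b \<le> \<phi> a"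
proof (rule ccontr)
  assume "\<not> \<phi> b \<le> \<phi> a"
  then have gap: "\<phi> b - \<phi> a > 0" by simp
  obtain n :: nat where n: "K * (b - a)\<^sup>2 < real n * (\<phi> b - \<phi> a)"
    using reals_Archimedean3[OF gap] by blast
  define d where "d = (b - a) / Suc n"
  have d: "0 \<le> d" "Suc n * d = b - a"
    using \<open>a \<le> b\<close> by (simp_all add: d_def)
  have grid: "a + real k * d \<le> b" if "k \<le> Suc n" for k
    using mult_right_mono[of "real k" "Suc n" d] that d by simp
  have "\<phi> b - \<phi> a = (\<Sum>k<Suc n. \<phi> (a + real (Suc k) * d) - \<phi> (a + real k * d))"
    using sum_lessThan_telescope[of "\<lambda>k. \<phi> (a + real k * d)"] d by simp
  also have "\<dots> \<le> (\<Sum>k<Suc n. K * d\<^sup>2)"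
  proof (rule sum_mono)
    fix k assume "k \<in> {..<Suc n}"
    then have "\<phi> (a + real (Suc k) * d) - \<phi> (a + real k * d) \<le> K * (real (Suc k) * d - real k * d)\<^sup>2"
      using increment[of "a + real k * d" "a + real (Suc k) * d"] grid[of "Suc k"] d
      by (simp add: mult_right_mono)
    then show "\<phi> (a + real (Suc k) * d) - \<phi> (a + real k * d) \<le> K * d\<^sup>2"
      by (simp add: algebra_simps)
  qed
  also have "\<dots> = K * (b - a)\<^sup>2 / Suc n"
    by (simp add: d_def power2_eq_square)
  finally have "Suc n * (\<phi> b - \<phi> a) \<le> K * (b - a)\<^sup>2"
    by (simp add: field_simps)
  with n gap show False by (simp add: ring_distribs)
qed

lemma continuous_on_if_has_integral_increments:
  fixes e g :: "real \<Rightarrow> 'a::banach"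
  assumes "\<And>t. t \<in> {t0..t1} \<Longrightarrow> (g has_integral (e t - e t0)) {t0..t}"
  shows "continuous_on {t0..t1} e"
proof (cases "t0 \<le> t1")
  case True
  have "(g has_integral (e t1 - e t0)) {t0..t1}"
    using assms True by simp
  then have "g integrable_on {t0..t1}"
    by blast
  then have "continuous_on {t0..t1} (\<lambda>t. e t0 + integral {t0..t} g)"
    by (intro continuous_on_add continuous_on_const indefinite_integral_continuous_1)
  moreover have "e t0 + integral {t0..t} g = e t" if "t \<in> {t0..t1}" for t
    using assms[OF that] by (simp add: integral_unique)
  ultimately show ?thesis
    by (rule continuous_on_eq)
qed simp

lemma quadratic_form_diff:
  assumes "linear P" and P_sym: "\<And>x y. inner x (P y) = inner (P x) y"
  shows "inner y (P y) - inner x (P x) = 2 * inner (P x) (y - x) + inner (y - x) (P (y - x))"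
proof -
  have "inner x (P (y - x)) = inner (P x) (y - x)" by (rule P_sym)
  then show ?thesis
    using \<open>linear P\<close> by (simp add: linear_diff inner_commute algebra_simps)
qed

lemma quadratic_form_le_norm_squared:
  assumes "\<And>w. norm (P w) \<le> KP * norm w"
  shows "inner w (P w) \<le> KP * (norm w)\<^sup>2"
proof -
  have "inner w (P w) \<le> norm w * norm (P w)"
    by (rule norm_cauchy_schwarz)
  also have "\<dots> \<le> norm w * (KP * norm w)"
    by (rule mult_left_mono[OF assms norm_ge_zero])
  finally show ?thesis
    by (simp add: power2_eq_square mult_ac)
qed

lemma quadratic_form_increment_le:
  fixes e g :: "real \<Rightarrow> 'a::real_inner" and P :: "'a \<Rightarrow> 'a"
  assumes "linear P" and P_sym: "\<And>x y. inner x (P y) = inner (P x) y"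
    and P_bound: "\<And>w. norm (P w) \<le> KP * norm w" and "0 \<le> KP"
    and g: "(g has_integral (e t - e s)) {s..t}"
    and g_bound: "\<And>r. r \<in> {s..t} \<Longrightarrow> norm (g r) \<le> M"
    and e_lip: "\<And>r. r \<in> {s..t} \<Longrightarrow> norm (e r - e s) \<le> M * (r - s)"
    and dissipative: "\<And>r. r \<in> {s..t} \<Longrightarrow> inner (P (e r)) (g r) \<le> 0"
    and "s \<le> t"
  shows "inner (e t) (P (e t)) - inner (e s) (P (e s)) \<le> 3 * KP * M\<^sup>2 * (t - s)\<^sup>2"
proof -
  have "norm (g s) \<le> M"
    using g_bound \<open>s \<le> t\<close> by simp
  then have "0 \<le> M"
    by (meson norm_ge_zero order_trans)
  have pointwise: "inner (P (e s)) (g r) \<le> KP * M\<^sup>2 * (t - s)" if r: "r \<in> {s..t}" for r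
  proof -
    have "inner (P (e s)) (g r) = inner (P (e r)) (g r) + inner (P (e s - e r)) (g r)"
      using \<open>linear P\<close> by (simp add: linear_diff inner_diff_left)
    also have "\<dots> \<le> norm (P (e s - e r)) * norm (g r)"
      using dissipative[OF r] norm_cauchy_schwarz[of "P (e s - e r)" "g r"] by linarith
    also have "\<dots> \<le> (KP * (M * (t - s))) * M"
    proof (rule mult_mono)
      have "norm (P (e s - e r)) \<le> KP * norm (e r - e s)"
        using P_bound[of "e s - e r"] norm_minus_commute[of "e s" "e r"] by simp
      also have "\<dots> \<le> KP * (M * (t - s))"
      proof (rule mult_left_mono[OF _ \<open>0 \<le> KP\<close>])
        have "M * (r - s) \<le> M * (t - s)"
          using r \<open>0 \<le> M\<close> by (intro mult_left_mono) auto
        then show "norm (e r - e s) \<le> M * (t - s)"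
          using e_lip[OF r] by linarith
      qed
      finally show "norm (P (e s - e r)) \<le> KP * (M * (t - s))" .
    qed (use g_bound r \<open>0 \<le> KP\<close> \<open>0 \<le> M\<close> in auto)
    finally show ?thesis
      by (simp add: power2_eq_square algebra_simps)
  qed
  have inner_g: "((\<lambda>r. inner (P (e s)) (g r)) has_integral inner (P (e s)) (e t - e s)) {s..t}"
    using has_integral_linear[OF g bounded_linear_inner_right] by (simp add: o_def)
  have cross: "inner (P (e s)) (e t - e s) \<le> KP * M\<^sup>2 * (t - s)\<^sup>2"
    using has_integral_le[OF inner_g has_integral_const_real pointwise] \<open>s \<le> t\<close>
    by (simp add: power2_eq_square mult_ac)
  have "inner (e t - e s) (P (e t - e s)) \<le> KP * (norm (e t - e s))\<^sup>2"
    by (rule quadratic_form_le_norm_squared[OF P_bound])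
  also have "\<dots> \<le> KP * (M * (t - s))\<^sup>2"
    using e_lip[of t] \<open>s \<le> t\<close> \<open>0 \<le> KP\<close> by (intro mult_left_mono power_mono) auto
  finally have quadratic: "inner (e t - e s) (P (e t - e s)) \<le> KP * M\<^sup>2 * (t - s)\<^sup>2"
    by (simp add: power_mult_distrib mult_ac)
  show ?thesis
    using quadratic_form_diff[OF \<open>linear P\<close> P_sym, of "e t" "e s"] cross quadratic by linarith
qed

lemma dissipative_quadratic_form_nonincreasing:
  fixes e :: "real \<Rightarrow> 'a::{real_inner,banach}" and A :: "real \<Rightarrow> 'a \<Rightarrow> 'a" and P :: "'a \<Rightarrow> 'a"
  assumes P: "bounded_linear P" and P_sym: "\<And>x y. inner x (P y) = inner (P x) y"
    and A_bound: "\<And>r w. norm (A r w) \<le> K * norm w"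
    and dissipative: "\<And>r w. inner (P w) (A r w) \<le> 0"
    and solution: "\<And>s t. t0 \<le> s \<Longrightarrow> s \<le> t \<Longrightarrow> ((\<lambda>r. A r (e r)) has_integral (e t - e s)) {s..t}"
    and "t0 \<le> t1"
  shows "inner (e t1) (P (e t1)) \<le> inner (e t0) (P (e t0))"
proof -
  obtain KP where KP: "0 < KP" "\<And>w. norm (P w) \<le> KP * norm w"
    using bounded_linear.pos_bounded[OF P] by (auto simp: mult.commute)
  have "continuous_on {t0..t1} e"
    by (rule continuous_on_if_has_integral_increments) (use solution in auto)
  then have "bounded (e ` {t0..t1})"
    by (intro compact_imp_bounded compact_continuous_image compact_Icc)
  then obtain E where E: "0 < E" "\<And>r. r \<in> {t0..t1} \<Longrightarrow> norm (e r) \<le> E"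
    unfolding bounded_pos by auto
  define M where "M = max K 0 * E"
  have A_e_bound: "norm (A r (e r)) \<le> M" if "r \<in> {t0..t1}" for r
  proof -
    have "norm (A r (e r)) \<le> max K 0 * norm (e r)"
      using A_bound[of r "e r"] by (simp add: order_trans mult_right_mono)
    also have "\<dots> \<le> M"
      using E(2)[OF that] by (simp add: M_def mult_left_mono)
    finally show ?thesis .
  qed
  have "inner (e t) (P (e t)) - inner (e s) (P (e s)) \<le> 3 * KP * M\<^sup>2 * (t - s)\<^sup>2"
    if "t0 \<le> s" "s \<le> t" "t \<le> t1" for s t
  proof (rule quadratic_form_increment_le[OF bounded_linear.linear[OF P] P_sym KP(2) _ solution])
    show "norm (e r - e s) \<le> M * (r - s)" if "r \<in> {s..t}" for r
      using has_integral_bound[of M "\<lambda>r. A r (e r)" "e r - e s" s r] solution[of s r] that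
        \<open>t0 \<le> s\<close> \<open>t \<le> t1\<close> A_e_bound E(1)
      by (simp add: M_def mult.commute)
  qed (use that A_e_bound dissipative KP in auto)
  then show ?thesis
    by (rule le_if_increments_le_square[where \<phi> = "\<lambda>r. inner (e r) (P (e r))", OF _ \<open>t0 \<le> t1\<close>])
qed

lemma norm_le_if_quadratic_form_le:
  fixes x y :: "'a::real_normed_vector" and Q :: "'a \<Rightarrow> real"
  assumes "0 < m"
    and lower: "\<And>w. m * (norm w)\<^sup>2 \<le> Q w" and upper: "\<And>w. Q w \<le> M * (norm w)\<^sup>2"
    and "Q y \<le> Q x"
  shows "norm y \<le> sqrt (M / m) * norm x"
proof -
  have "m * (norm y)\<^sup>2 \<le> M * (norm x)\<^sup>2"
    using lower[of y] upper[of x] \<open>Q y \<le> Q x\<close> by linarith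
  then have "(norm y)\<^sup>2 \<le> M / m * (norm x)\<^sup>2"
    using \<open>0 < m\<close> by (simp add: field_simps)
  then have "sqrt ((norm y)\<^sup>2) \<le> sqrt (M / m * (norm x)\<^sup>2)"
    by (rule real_sqrt_le_mono)
  then show ?thesis
    by (simp only: real_sqrt_mult real_sqrt_abs abs_norm_cancel)
qed

lemma uniformly_stable_solutionI:
  assumes "0 < \<kappa>"
    and bound: "\<And>t0 x t. T \<le> t0 \<Longrightarrow> is_solution_from f u x t0 \<Longrightarrow> t0 \<le> t \<Longrightarrow>
                  norm (x t - \<xi> t) \<le> \<kappa> * norm (x t0 - \<xi> t0)"
  shows "uniformly_stable_solution f u \<xi> T"
  unfolding uniformly_stable_solution_def
proof (intro allI impI)
  fix \<epsilon> :: real assume "0 < \<epsilon>"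
  show "\<exists>\<delta>>0. \<forall>t0 x. T \<le> t0 \<longrightarrow> is_solution_from f u x t0 \<longrightarrow>
          norm (x t0 - \<xi> t0) < \<delta> \<longrightarrow> (\<forall>t\<ge>t0. norm (x t - \<xi> t) < \<epsilon>)"
  proof (intro exI[of _ "\<epsilon> / \<kappa>"] conjI allI impI)
    fix t0 x t
    assume "T \<le> t0" "is_solution_from f u x t0" "norm (x t0 - \<xi> t0) < \<epsilon> / \<kappa>" "t0 \<le> t"
    then have "norm (x t - \<xi> t) \<le> \<kappa> * norm (x t0 - \<xi> t0)" "\<kappa> * norm (x t0 - \<xi> t0) < \<epsilon>"
      using bound \<open>0 < \<kappa>\<close> by (auto simp: field_simps)
    then show "norm (x t - \<xi> t) < \<epsilon>" by linarith
  qed (use \<open>0 < \<epsilon>\<close> \<open>0 < \<kappa>\<close> in simp)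
qed

lemma is_solution_from_diff_has_integral:
  assumes "is_solution_from f u x t0" "is_solution_from f u \<xi> T" "T \<le> t0" "t0 \<le> s" "s \<le> t"
  shows "((\<lambda>r. f (u r) (x r) - f (u r) (\<xi> r)) has_integral ((x t - \<xi> t) - (x s - \<xi> s))) {s..t}"
proof -
  have "((\<lambda>r. f (u r) (x r) - f (u r) (\<xi> r)) has_integral ((x t - x s) - (\<xi> t - \<xi> s))) {s..t}"
    using assms unfolding is_solution_from_def by (intro has_integral_diff) auto
  then show ?thesis by (simp add: algebra_simps)
qed

lemma ess_boundedE:
  assumes "ess_bounded u"
  obtains N v B where "negligible N" "\<And>r. \<bar>v r\<bar> \<le> B" "\<And>r. r \<notin> N \<Longrightarrow> v r = u r"
proof -
  obtain B where "AE t in lborel. \<bar>u t\<bar> \<le> B"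
    using assms unfolding ess_bounded_def by blast
  then obtain N where N: "{t \<in> space lborel. \<not> \<bar>u t\<bar> \<le> B} \<subseteq> N"
      "emeasure lborel N = 0" "N \<in> sets lborel"
    by (rule AE_E)
  have bound: "\<bar>u r\<bar> \<le> B" if "r \<notin> N" for r
    using N(1) that by auto
  have "negligible N"
    unfolding negligible_iff_null_sets by (intro null_sets_completionI null_setsI N(2,3))
  moreover have "\<bar>if r \<in> N then 0 else u r\<bar> \<le> max B 0" for r
    using bound[of r] by (auto simp: le_max_iff_disj)
  moreover have "(if r \<in> N then 0 else u r) = u r" if "r \<notin> N" for r
    using that by simp
  ultimately show ?thesis
    by (rule that)
qed

lemma control_affine_norm_bound:
  fixes F G :: "'a::real_normed_vector \<Rightarrow> 'b::real_normed_vector"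
  assumes "bounded_linear F" "bounded_linear G"
  obtains K where "\<And>v w. \<bar>v\<bar> \<le> B \<Longrightarrow> norm (F w + v *\<^sub>R G w) \<le> K * norm w"
proof -
  obtain KF KG where KF: "\<And>w. norm (F w) \<le> norm w * KF" and KG: "0 \<le> KG" "\<And>w. norm (G w) \<le> norm w * KG"
    using bounded_linear.bounded[OF assms(1)] bounded_linear.nonneg_bounded[OF assms(2)] by blast
  have "norm (F w + v *\<^sub>R G w) \<le> (KF + B * KG) * norm w" if "\<bar>v\<bar> \<le> B" for v w
  proof -
    have "norm (F w + v *\<^sub>R G w) \<le> norm (F w) + \<bar>v\<bar> * norm (G w)"
      using norm_triangle_ineq[of "F w" "v *\<^sub>R G w"] by simp
    also have "\<dots> \<le> norm w * KF + B * (norm w * KG)"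
      using that KF[of w] KG by (intro add_mono mult_mono) auto
    finally show ?thesis by (simp add: algebra_simps)
  qed
  then show ?thesis using that by blast
qed

definition bbc_passive :: "real \<Rightarrow> real \<Rightarrow> real \<Rightarrow> real \<Rightarrow> real \<Rightarrow> real \<Rightarrow> real^3 \<Rightarrow> real^3" where
  "bbc_passive L C_H C_L R_D R_H R_L w =
     vector [ - (1 / L) * w$3,
              - (1 / ((R_D * R_H / (R_D + R_H)) * C_H)) * w$2,
              (1 / C_L) * w$1 - (1 / (R_L * C_L)) * w$3 ]"

definition bbc_switching :: "real \<Rightarrow> real \<Rightarrow> real^3 \<Rightarrow> real^3" where
  "bbc_switching L C_H w = vector [(1 / L) * w$2, - (1 / C_H) * w$1, 0]"

definition bbc_energy_weight :: "real \<Rightarrow> real \<Rightarrow> real \<Rightarrow> real^3 \<Rightarrow> real^3" where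
  "bbc_energy_weight L C_H C_L w = vector [L * w$1, C_H * w$2, C_L * w$3]"

lemma inner_real3: "inner (a::real^3) b = a$1 * b$1 + a$2 * b$2 + a$3 * b$3"
  by (simp add: inner_vec_def sum_3)

lemma norm_real3_squared: "(norm (a::real^3))\<^sup>2 = (a$1)\<^sup>2 + (a$2)\<^sup>2 + (a$3)\<^sup>2"
  unfolding power2_norm_eq_inner inner_real3 by (simp add: power2_eq_square)

lemma bbc_field_diff:
  "bbc_field L C_H C_L R_D R_H R_L E_H E_L v x - bbc_field L C_H C_L R_D R_H R_L E_H E_L v y
   = bbc_passive L C_H C_L R_D R_H R_L (x - y) + v *\<^sub>R bbc_switching L C_H (x - y)"
  by (simp add: vec_eq_iff forall_3 bbc_field_def bbc_passive_def bbc_switching_def Let_def algebra_simps)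

lemma bounded_linear_bbc_passive: "bounded_linear (bbc_passive L C_H C_L R_D R_H R_L)"
  unfolding linear_conv_bounded_linear[symmetric]
  by (rule linearI) (simp_all add: vec_eq_iff forall_3 bbc_passive_def algebra_simps)

lemma bounded_linear_bbc_switching: "bounded_linear (bbc_switching L C_H)"
  unfolding linear_conv_bounded_linear[symmetric]
  by (rule linearI) (simp_all add: vec_eq_iff forall_3 bbc_switching_def algebra_simps)

lemma bounded_linear_bbc_energy_weight: "bounded_linear (bbc_energy_weight L C_H C_L)"
  unfolding linear_conv_bounded_linear[symmetric]
  by (rule linearI) (simp_all add: vec_eq_iff forall_3 bbc_energy_weight_def algebra_simps)

lemma inner_bbc_energy_weight_sym:
  "inner x (bbc_energy_weight L C_H C_L y) = inner (bbc_energy_weight L C_H C_L x) y"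
  by (simp add: inner_real3 bbc_energy_weight_def)

lemma inner_bbc_energy_weight_switching:
  assumes "0 < L" "0 < C_H"
  shows "inner (bbc_energy_weight L C_H C_L w) (bbc_switching L C_H w) = 0"
  using assms by (simp add: inner_real3 bbc_energy_weight_def bbc_switching_def)

lemma inner_bbc_energy_weight_passive:
  assumes "0 < L" "0 < C_H" "0 < C_L" "0 < R_D" "0 < R_H" "0 < R_L"
  shows "inner (bbc_energy_weight L C_H C_L w) (bbc_passive L C_H C_L R_D R_H R_L w)
         = - ((R_D + R_H) / (R_D * R_H)) * (w$2)\<^sup>2 - (1 / R_L) * (w$3)\<^sup>2"
  using assms by (simp add: inner_real3 bbc_energy_weight_def bbc_passive_def field_simps power2_eq_square)

lemma bbc_dissipative:
  assumes "0 < L" "0 < C_H" "0 < C_L" "0 < R_D" "0 < R_H" "0 < R_L"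
  shows "inner (bbc_energy_weight L C_H C_L w)
           (bbc_passive L C_H C_L R_D R_H R_L w + v *\<^sub>R bbc_switching L C_H w) \<le> 0"
proof -
  have "inner (bbc_energy_weight L C_H C_L w)
          (bbc_passive L C_H C_L R_D R_H R_L w + v *\<^sub>R bbc_switching L C_H w)
        = - ((R_D + R_H) / (R_D * R_H)) * (w$2)\<^sup>2 - (1 / R_L) * (w$3)\<^sup>2"
    using assms
    by (simp add: inner_add_right inner_bbc_energy_weight_switching inner_bbc_energy_weight_passive)
  moreover have "0 \<le> (R_D + R_H) / (R_D * R_H) * (w$2)\<^sup>2" "0 \<le> 1 / R_L * (w$3)\<^sup>2"
    using assms by (intro mult_nonneg_nonneg divide_nonneg_nonneg; simp)+
  ultimately show ?thesis
    by linarith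
qed

lemma bbc_energy_bounds:
  assumes "0 < L" "0 < C_H" "0 < C_L"
  shows "min L (min C_H C_L) * (norm w)\<^sup>2 \<le> inner w (bbc_energy_weight L C_H C_L w)"
    and "inner w (bbc_energy_weight L C_H C_L w) \<le> max L (max C_H C_L) * (norm w)\<^sup>2"
proof -
  have energy: "inner w (bbc_energy_weight L C_H C_L w) = L * (w$1)\<^sup>2 + C_H * (w$2)\<^sup>2 + C_L * (w$3)\<^sup>2"
    by (simp add: inner_real3 bbc_energy_weight_def power2_eq_square)
  show "min L (min C_H C_L) * (norm w)\<^sup>2 \<le> inner w (bbc_energy_weight L C_H C_L w)"
    unfolding energy norm_real3_squared distrib_left
    by (intro add_mono mult_right_mono) auto
  show "inner w (bbc_energy_weight L C_H C_L w) \<le> max L (max C_H C_L) * (norm w)\<^sup>2"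
    unfolding energy norm_real3_squared distrib_left
    by (intro add_mono mult_right_mono) auto
qed

lemma bbc_error_energy_nonincreasing:
  fixes u :: "real \<Rightarrow> real"
  assumes pos: "0 < L" "0 < C_H" "0 < C_L" "0 < R_D" "0 < R_H" "0 < R_L" and "ess_bounded u"
    and solution_x: "is_solution_from (bbc_field L C_H C_L R_D R_H R_L E_H E_L) u x t0"
    and solution_\<xi>: "is_solution_from (bbc_field L C_H C_L R_D R_H R_L E_H E_L) u \<xi> T"
    and "T \<le> t0" "t0 \<le> t"
  shows "inner (x t - \<xi> t) (bbc_energy_weight L C_H C_L (x t - \<xi> t))
         \<le> inner (x t0 - \<xi> t0) (bbc_energy_weight L C_H C_L (x t0 - \<xi> t0))"
proof -
  obtain N v B where N: "negligible N" and v: "\<And>r. \<bar>v r\<bar> \<le> B" "\<And>r. r \<notin> N \<Longrightarrow> v r = u r"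
    using ess_boundedE[OF \<open>ess_bounded u\<close>] by blast
  obtain K where K: "\<And>c w. \<bar>c\<bar> \<le> B \<Longrightarrow>
      norm (bbc_passive L C_H C_L R_D R_H R_L w + c *\<^sub>R bbc_switching L C_H w) \<le> K * norm w"
    using control_affine_norm_bound[where B = B, OF bounded_linear_bbc_passive[of L C_H C_L R_D R_H R_L]
        bounded_linear_bbc_switching[of L C_H]] by blast
  have error: "((\<lambda>r. bbc_passive L C_H C_L R_D R_H R_L (x r - \<xi> r) + v r *\<^sub>R bbc_switching L C_H (x r - \<xi> r))
      has_integral ((x t' - \<xi> t') - (x s - \<xi> s))) {s..t'}" if "t0 \<le> s" "s \<le> t'" for s t'
    using is_solution_from_diff_has_integral[OF solution_x solution_\<xi> \<open>T \<le> t0\<close> that]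
    by (rule has_integral_spike[OF N, rotated]) (simp add: bbc_field_diff v(2))
  show ?thesis
    by (rule dissipative_quadratic_form_nonincreasing
        [where A = "\<lambda>r w. bbc_passive L C_H C_L R_D R_H R_L w + v r *\<^sub>R bbc_switching L C_H w"
           and e = "\<lambda>r. x r - \<xi> r",
         OF bounded_linear_bbc_energy_weight inner_bbc_energy_weight_sym K[OF v(1)]
            bbc_dissipative[OF pos] error \<open>t0 \<le> t\<close>])
qed

theorem lemma1:
  fixes L C_H C_L R_D R_H R_L E_H E_L :: real and u :: "real \<Rightarrow> real"
  assumes "L > 0" "C_H > 0" "C_L > 0" "R_D > 0" "R_H > 0" "R_L > 0" "E_H > 0" "E_L > 0"
    and "ess_bounded u"
  shows "\<forall>\<xi> T. is_solution_from (bbc_field L C_H C_L R_D R_H R_L E_H E_L) u \<xi> T \<longrightarrow>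
           uniformly_stable_solution (bbc_field L C_H C_L R_D R_H R_L E_H E_L) u \<xi> T"
proof (intro allI impI)
  fix \<xi> T
  assume solution_\<xi>: "is_solution_from (bbc_field L C_H C_L R_D R_H R_L E_H E_L) u \<xi> T"
  have pos: "0 < L" "0 < C_H" "0 < C_L" "0 < R_D" "0 < R_H" "0 < R_L"
    using assms by simp_all
  define m where "m = min L (min C_H C_L)"
  define M where "M = max L (max C_H C_L)"
  have "0 < m" "0 < M"
    using pos by (simp_all add: m_def M_def)
  show "uniformly_stable_solution (bbc_field L C_H C_L R_D R_H R_L E_H E_L) u \<xi> T"
  proof (rule uniformly_stable_solutionI)
    show "0 < sqrt (M / m)"
      using \<open>0 < m\<close> \<open>0 < M\<close> by simp
    fix t0 x t
    assume "T \<le> t0" "is_solution_from (bbc_field L C_H C_L R_D R_H R_L E_H E_L) u x t0" "t0 \<le> t"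
    from bbc_error_energy_nonincreasing[OF pos assms(9) this(2) solution_\<xi> this(1,3)]
    show "norm (x t - \<xi> t) \<le> sqrt (M / m) * norm (x t0 - \<xi> t0)"
      by (rule norm_le_if_quadratic_form_le[OF \<open>0 < m\<close> bbc_energy_bounds[OF pos(1-3), folded m_def M_def]])
  qed
qed

end
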